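(* Let $m>n>0$ be relatively prime integers and $(r,s)\in\mathbb{Z}^2$. Then $(r,s)=\beta(m,n)$ if and only if $(s,\,r-2s)=\beta(2m+n,\,m)$.
   Context: For relatively prime integers $a>b>0$, $\beta(a,b)$ denotes the Bézout coefficients given by the Euclidean algorithm: with $a=q_1b+r_1$, $b=q_2r_1+r_2$, $\dots$, $r_{k-2}=q_kr_{k-1}+r_k$, $r_{k-1}=1$, $r_k=0$ ($r_{-1}=a$, $r_0=b$), write $\begin{pmatrix}a\\ b\end{pmatrix}=M\begin{pmatrix}1\\0\end{pmatrix}$ with $M=\prod_{i=1}^k\begin{pmatrix}q_i&1\\1&0\end{pmatrix}$; then $\beta(a,b)$ is the first row of $M^{-1}$, and $\beta(a,b)=(r,s)$ satisfies $ra+sb=1$. *)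

theory Defs
  imports "HOL-Analysis.Analysis"
begin

definition qmat :: "int \<Rightarrow> int^2^2" where
  "qmat q = (\<chi> i j. if i = 1 \<and> j = 1 then q else if i = 2 \<and> j = 2 then 0 else 1)"

(* M(a,b) = product of the matrices (q_i 1; 1 0) produced by the Euclidean algorithm
   on (a,b): a = q_1 b + r_1, b = q_2 r_1 + r_2, ..., until the remainder is 0. *)
function euclid_mat :: "int \<Rightarrow> int \<Rightarrow> int^2^2" where
  "euclid_mat a b = (if b \<le> 0 then mat 1 else qmat (a div b) ** euclid_mat b (a mod b))"
  by auto
termination
  by (relation "Wellfounded.measure (\<lambda>(a,b). nat b)") auto

declare euclid_mat.simps [simp del]

definition beta :: "int \<Rightarrow> int \<Rightarrow> int \<times> int" where
  "beta a b = (let R = matrix_inv (euclid_mat a b) $ 1 in (R $ 1, R $ 2))"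

end

theory Submission
  imports Defs
begin

text \<open>One step of the Euclidean algorithm splits off the factor \<open>qmat q\<close> on the left of the
  Euclid matrix, hence the factor \<open>(qmat q)\<inverse> = (0 1; 1 -q)\<close> on the right of its inverse.
  Reading off first rows, \<open>\<beta>(a,b) = (s, r - q s)\<close> where \<open>(r,s) = \<beta>(b, a mod b)\<close> and
  \<open>q = a div b\<close>. For \<open>(2m+n, m)\<close> the first step has \<open>q = 2\<close> and remainder \<open>n\<close>.\<close>

lemma sum_UNIV_2: "(\<Sum>k\<in>(UNIV::2 set). f k) = f 1 + f 2"
  by (simp add: UNIV_2)

lemma matrix_inv_inverse:
  fixes A :: "'a::semiring_1^'n^'m"
  assumes "invertible A"
  shows "A ** matrix_inv A = mat 1" and "matrix_inv A ** A = mat 1"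
proof -
  from assms obtain B :: "'a^'m^'n" where "A ** B = mat 1 \<and> B ** A = mat 1"
    unfolding invertible_def by blast
  then have "A ** matrix_inv A = mat 1 \<and> matrix_inv A ** A = mat 1"
    unfolding matrix_inv_def by (rule someI)
  then show "A ** matrix_inv A = mat 1" and "matrix_inv A ** A = mat 1"
    by simp_all
qed

lemma matrix_inv_eqI:
  fixes A :: "'a::semiring_1^'n^'m" and B :: "'a^'m^'n"
  assumes AB: "A ** B = mat 1" and BA: "B ** A = mat 1"
  shows "matrix_inv A = B"
proof -
  have "invertible A"
    using AB BA unfolding invertible_def by blast
  have "matrix_inv A = matrix_inv A ** (A ** B)"
    by (simp add: AB)
  also have "\<dots> = (matrix_inv A ** A) ** B"
    by (simp only: matrix_mul_assoc)
  also have "\<dots> = B"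
    by (simp add: matrix_inv_inverse(2)[OF \<open>invertible A\<close>])
  finally show ?thesis .
qed

lemma matrix_inv_mult:
  fixes A :: "'a::semiring_1^'n^'m" and B :: "'a^'k^'n"
  assumes A: "invertible A" and B: "invertible B"
  shows "matrix_inv (A ** B) = matrix_inv B ** matrix_inv A"
proof (rule matrix_inv_eqI)
  have "A ** B ** (matrix_inv B ** matrix_inv A) = A ** ((B ** matrix_inv B) ** matrix_inv A)"
    by (simp only: matrix_mul_assoc)
  then show "A ** B ** (matrix_inv B ** matrix_inv A) = mat 1"
    by (simp add: matrix_inv_inverse A B)
  have "matrix_inv B ** matrix_inv A ** (A ** B) = matrix_inv B ** ((matrix_inv A ** A) ** B)"
    by (simp only: matrix_mul_assoc)
  then show "matrix_inv B ** matrix_inv A ** (A ** B) = mat 1"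
    by (simp add: matrix_inv_inverse A B)
qed

definition qmat_inv :: "int \<Rightarrow> int^2^2" where
  "qmat_inv q = (\<chi> i j. if i = 1 \<and> j = 1 then 0 else if i = 2 \<and> j = 2 then -q else 1)"

lemma qmat_mult_qmat_inv: "qmat q ** qmat_inv q = mat 1"
  and qmat_inv_mult_qmat: "qmat_inv q ** qmat q = mat 1"
  by (auto simp: vec_eq_iff matrix_matrix_mult_def qmat_def qmat_inv_def mat_def
      sum_UNIV_2 forall_2)

lemma matrix_inv_qmat: "matrix_inv (qmat q) = qmat_inv q"
  by (intro matrix_inv_eqI qmat_mult_qmat_inv qmat_inv_mult_qmat)

lemma invertible_qmat: "invertible (qmat q)"
  using qmat_mult_qmat_inv qmat_inv_mult_qmat unfolding invertible_def by blast

lemma euclid_mat_step: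
  assumes "0 < b"
  shows "euclid_mat a b = qmat (a div b) ** euclid_mat b (a mod b)"
  using assms by (subst euclid_mat.simps) simp

lemma invertible_euclid_mat: "invertible (euclid_mat a b)"
proof (induction a b rule: euclid_mat.induct)
  case (1 a b)
  show ?case
  proof (cases "0 < b")
    case True
    then show ?thesis
      using 1 invertible_qmat invertible_mult euclid_mat_step by fastforce
  next
    case False
    then have "euclid_mat a b = mat 1"
      by (subst euclid_mat.simps) simp
    then show ?thesis
      using matrix_mul_lid unfolding invertible_def by metis
  qed
qed

lemma beta_step:
  assumes "0 < b"
  shows "beta a b =
    (snd (beta b (a mod b)), fst (beta b (a mod b)) - (a div b) * snd (beta b (a mod b)))"
proof -
  have "matrix_inv (euclid_mat a b) = matrix_inv (euclid_mat b (a mod b)) ** qmat_inv (a div b)"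
    using assms by (simp add: euclid_mat_step matrix_inv_mult invertible_qmat
        invertible_euclid_mat matrix_inv_qmat)
  then show ?thesis
    unfolding beta_def by (simp add: Let_def matrix_matrix_mult_def qmat_inv_def sum_UNIV_2)
qed

theorem lemma2p2:
  fixes m n r s :: int
  assumes "0 < n" and "n < m" and "coprime m n"
  shows "(r, s) = beta m n \<longleftrightarrow> (s, r - 2 * s) = beta (2 * m + n) m"
proof -
  have "(2 * m + n) div m = 2" and "(2 * m + n) mod m = n"
    using assms by simp_all
  then have "beta (2 * m + n) m = (snd (beta m n), fst (beta m n) - 2 * snd (beta m n))"
    using assms beta_step[of m "2 * m + n"] by simp
  then show ?thesis
    by (cases "beta m n") auto
qed

end
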